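(* Let $X$ be a $*$-bimodule for a unital complex $*$-algebra $A$, let $F$ be a hermitian linear functional on $X$ (i.e. $F(x^+)=\overline{F(x)}$) and let $f$ be a positive linear functional on $A$. Suppose that for each $x\in X$ there is a constant $C_x>0$ such that $$|F(a^+\cdot x)|^2\le C_x\, f(a^+a)\quad\text{for all } a\in A.$$ Let $\rho_f$ be the GNS representation of $f$ on $\mathcal{D}_f$ with cyclic vector $\varphi_f$. Then there exists a $*$-representation $(\theta_F,\rho_f)$ of the $*$-bimodule $X$ on $\mathcal{D}_f$ such that $$F(a\cdot x\cdot b)=\langle\theta_F(x)\rho_f(b)\varphi_f,\rho_f(a^+)\varphi_f\rangle\quad\text{for all } a,b\in A,\ x\in X.$$ Moreover, if $(\theta,\rho)$ is another $*$-representation of $X$ on a complex inner product space $(\mathcal{D},(\cdot,\cdot))$ with Hilbert space completion $\mathcal{H}$ and $\psi\in\mathcal{D}$ satisfies $\rho(A)\psi=\mathcal{D}$, $f(a)=(\rho(a)\psi,\psi)$ for $a\in A$, and $F(a\cdot x\cdot b)=(\theta(x)\rho(b)\psi,\rho(a^+)\psi)$ for all $a,b\in A$, $x\in X$, then there is a unitary operator $U:\mathcal{H}_f\to\mathcal{H}$ with $U\varphi_f=\psi$, $U\mathcal{D}_f=\mathcal{D}$, $\rho(a)=U\rho_f(a)U^{-1}$ and $\theta(x)=U\theta_F(x)U^{-1}$ for all $a\in A$, $x\in X$.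
   Context: A $*$-bimodule $X$ for $A$: a complex $A$-bimodule (unital left and right $A$-module with $(a\cdot x)\cdot b=a\cdot(x\cdot b)$) with conjugate-linear involution $x\mapsto x^+$, $(x^+)^+=x$, satisfying $(a\cdot x\cdot b)^+=b^+\cdot x^+\cdot a^+$. For a complex inner product space $\mathcal{D}$ with completion $\mathcal{H}$, $\mathcal{L}^+(\mathcal{D},\mathcal{H})$ is the set of linear operators $t:\mathcal{D}\to\mathcal{H}$ with $\mathcal{D}(t^* )\supseteq\mathcal{D}$, $t^+:=t^*|_{\mathcal{D}}$. A $*$-representation of $A$ on $\mathcal{D}$ is an algebra homomorphism $\rho$ into linear operators on $\mathcal{D}$ with $\langle\rho(a)\varphi,\psi\rangle=\langle\varphi,\rho(a^+)\psi\rangle$, nondegenerate if $\rho(1)=I$. A $*$-representation of $X$ on $\mathcal{D}$ is a pair $(\theta,\rho)$ with $\rho$ a nondegenerate $*$-representation of $A$ on $\mathcal{D}$ and $\theta:X\to\mathcal{L}^+(\mathcal{D},\mathcal{H})$ linear with $\theta(x^+)=\theta(x)^+$ and $\langle\theta(a\cdot x\cdot b)\varphi,\psi\rangle=\langle\theta(x)\rho(b)\varphi,\rho(a^+)\psi\rangle$ for all $a,b\in A$, $x\in X$, $\varphi,\psi\in\mathcal{D}$. GNS representation of a positive functional $f$ (i.e. $f(a^+a)\ge0$): $\mathcal{N}_f=\{a\in A: f(a^+a)=0\}$, $\mathcal{D}_f=A/\mathcal{N}_f$ with inner product $\langle a+\mathcal{N}_f,b+\mathcal{N}_f\rangle=f(b^+a)$,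 $\rho_f(a)(b+\mathcal{N}_f)=ab+\mathcal{N}_f$, $\varphi_f=1+\mathcal{N}_f$ (so $\mathcal{D}_f=\rho_f(A)\varphi_f$ and $f(a^+b)=\langle\rho_f(b)\varphi_f,\rho_f(a)\varphi_f\rangle$); $\mathcal{H}_f$ is the completion of $\mathcal{D}_f$. *)

theory Defs
  imports Complex_Main
begin

class cvec = ab_group_add +
  fixes scaleC :: "complex \<Rightarrow> 'a \<Rightarrow> 'a"
  assumes scaleC_add_right: "scaleC c (x + y) = scaleC c x + scaleC c y"
    and scaleC_add_left: "scaleC (c + d) x = scaleC c x + scaleC d x"
    and scaleC_scaleC: "scaleC c (scaleC d x) = scaleC (c * d) x"
    and scaleC_one: "scaleC 1 x = x"

class cinner_space = cvec +
  fixes cinner :: "'a \<Rightarrow> 'a \<Rightarrow> complex"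
  assumes cinner_add_left: "cinner (x + y) z = cinner x z + cinner y z"
    and cinner_scaleC_left: "cinner (scaleC c x) y = c * cinner x y"
    and cinner_commute: "cinner y x = cnj (cinner x y)"
    and cinner_ge_zero: "0 \<le> Re (cinner x x)"
    and cinner_eq_zero: "cinner x x = 0 \<Longrightarrow> x = 0"

definition cnorm :: "'a::cinner_space \<Rightarrow> real" where
  "cnorm x = sqrt (Re (cinner x x))"

class chilbert = cinner_space +
  assumes complete:
    "(\<forall>e>0. \<exists>N::nat. \<forall>m\<ge>N. \<forall>n\<ge>N. sqrt (Re (cinner (s m - s n) (s m - s n))) < e)
       \<Longrightarrow> (\<exists>l. \<forall>e>0. \<exists>N::nat. \<forall>n\<ge>N. sqrt (Re (cinner (s n - l) (s n - l))) < e)"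

text \<open>Unital complex *-algebra (the unit is the 1 of monoid_mult; the zero algebra is allowed).\<close>
class cstar_algebra = cvec + ring + monoid_mult +
  fixes star :: "'a \<Rightarrow> 'a"
  assumes scaleC_mult_left: "scaleC c (a * b) = scaleC c a * b"
    and scaleC_mult_right: "scaleC c (a * b) = a * scaleC c b"
    and star_star: "star (star a) = a"
    and star_add: "star (a + b) = star a + star b"
    and star_scaleC: "star (scaleC c a) = scaleC (cnj c) (star a)"
    and star_mult: "star (a * b) = star b * star a"

definition star_bimodule ::
  "('a::cstar_algebra \<Rightarrow> 'x::cvec \<Rightarrow> 'x) \<Rightarrow> ('x \<Rightarrow> 'a \<Rightarrow> 'x) \<Rightarrow> ('x \<Rightarrow> 'x) \<Rightarrow> bool" where
  "star_bimodule lact ract xst \<longleftrightarrow>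
     (\<forall>a x y. lact a (x + y) = lact a x + lact a y) \<and>
     (\<forall>a b x. lact (a + b) x = lact a x + lact b x) \<and>
     (\<forall>c a x. lact (scaleC c a) x = scaleC c (lact a x)) \<and>
     (\<forall>c a x. lact a (scaleC c x) = scaleC c (lact a x)) \<and>
     (\<forall>a b x. lact (a * b) x = lact a (lact b x)) \<and>
     (\<forall>x. lact 1 x = x) \<and>
     (\<forall>a x y. ract (x + y) a = ract x a + ract y a) \<and>
     (\<forall>a b x. ract x (a + b) = ract x a + ract x b) \<and>
     (\<forall>c a x. ract x (scaleC c a) = scaleC c (ract x a)) \<and>
     (\<forall>c a x. ract (scaleC c x) a = scaleC c (ract x a)) \<and>
     (\<forall>a b x. ract x (a * b) = ract (ract x a) b) \<and>
     (\<forall>x. ract x 1 = x) \<and>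
     (\<forall>a x b. ract (lact a x) b = lact a (ract x b)) \<and>
     (\<forall>x. xst (xst x) = x) \<and>
     (\<forall>x y. xst (x + y) = xst x + xst y) \<and>
     (\<forall>c x. xst (scaleC c x) = scaleC (cnj c) (xst x)) \<and>
     (\<forall>a x b. xst (lact a (ract x b)) = lact (star b) (ract (xst x) (star a)))"

definition clinear_functional :: "('v::cvec \<Rightarrow> complex) \<Rightarrow> bool" where
  "clinear_functional g \<longleftrightarrow> (\<forall>x y. g (x + y) = g x + g y) \<and> (\<forall>c x. g (scaleC c x) = c * g x)"

definition positive_functional :: "('a::cstar_algebra \<Rightarrow> complex) \<Rightarrow> bool" where
  "positive_functional f \<longleftrightarrow> (\<forall>a. Im (f (star a * a)) = 0 \<and> 0 \<le> Re (f (star a * a)))"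

definition csubspace :: "'h::cvec set \<Rightarrow> bool" where
  "csubspace D \<longleftrightarrow> 0 \<in> D \<and> (\<forall>u\<in>D. \<forall>v\<in>D. u + v \<in> D) \<and> (\<forall>c. \<forall>u\<in>D. scaleC c u \<in> D)"

definition cdense :: "'h::cinner_space set \<Rightarrow> bool" where
  "cdense D \<longleftrightarrow> (\<forall>v. \<forall>e>0. \<exists>d\<in>D. cnorm (v - d) < e)"

text \<open>A complex inner product space D together with its Hilbert space completion H
  is modelled as a dense subspace D of a Hilbert space H (the type).\<close>
definition dense_domain :: "'h::chilbert set \<Rightarrow> bool" where
  "dense_domain D \<longleftrightarrow> csubspace D \<and> cdense D"

definition clinear_on :: "'h::cvec set \<Rightarrow> ('h \<Rightarrow> 'k::cvec) \<Rightarrow> bool" where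
  "clinear_on D t \<longleftrightarrow> (\<forall>u\<in>D. \<forall>v\<in>D. t (u + v) = t u + t v) \<and> (\<forall>c. \<forall>u\<in>D. t (scaleC c u) = scaleC c (t u))"

definition adj_domain :: "'h::chilbert set \<Rightarrow> ('h \<Rightarrow> 'h) \<Rightarrow> 'h set" where
  "adj_domain D t = {\<psi>. \<exists>\<eta>. \<forall>\<phi>\<in>D. cinner (t \<phi>) \<psi> = cinner \<phi> \<eta>}"

definition adjoint :: "'h::chilbert set \<Rightarrow> ('h \<Rightarrow> 'h) \<Rightarrow> 'h \<Rightarrow> 'h" where
  "adjoint D t \<psi> = (THE \<eta>. \<forall>\<phi>\<in>D. cinner (t \<phi>) \<psi> = cinner \<phi> \<eta>)"

text \<open>L^+(D,H): linear t : D -> H with D contained in the domain of t*.  t^+ := t* restricted to D.\<close>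
definition Lplus :: "'h::chilbert set \<Rightarrow> ('h \<Rightarrow> 'h) \<Rightarrow> bool" where
  "Lplus D t \<longleftrightarrow> clinear_on D t \<and> D \<subseteq> adj_domain D t"

text \<open>Nondegenerate *-representation of A on D (operators identified with their action on D).\<close>
definition star_rep :: "'h::chilbert set \<Rightarrow> ('a::cstar_algebra \<Rightarrow> 'h \<Rightarrow> 'h) \<Rightarrow> bool" where
  "star_rep D \<rho> \<longleftrightarrow>
     (\<forall>a. \<forall>v\<in>D. \<rho> a v \<in> D) \<and>
     (\<forall>a. clinear_on D (\<rho> a)) \<and>
     (\<forall>a b. \<forall>v\<in>D. \<rho> (a + b) v = \<rho> a v + \<rho> b v) \<and>
     (\<forall>c a. \<forall>v\<in>D. \<rho> (scaleC c a) v = scaleC c (\<rho> a v)) \<and>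
     (\<forall>a b. \<forall>v\<in>D. \<rho> (a * b) v = \<rho> a (\<rho> b v)) \<and>
     (\<forall>a. \<forall>\<phi>\<in>D. \<forall>\<psi>\<in>D. cinner (\<rho> a \<phi>) \<psi> = cinner \<phi> (\<rho> (star a) \<psi>))"

definition nondegenerate :: "'h::chilbert set \<Rightarrow> ('a::cstar_algebra \<Rightarrow> 'h \<Rightarrow> 'h) \<Rightarrow> bool" where
  "nondegenerate D \<rho> \<longleftrightarrow> (\<forall>v\<in>D. \<rho> 1 v = v)"

definition bimod_star_rep ::
  "('a::cstar_algebra \<Rightarrow> 'x::cvec \<Rightarrow> 'x) \<Rightarrow> ('x \<Rightarrow> 'a \<Rightarrow> 'x) \<Rightarrow> ('x \<Rightarrow> 'x) \<Rightarrow>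
   'h::chilbert set \<Rightarrow> ('x \<Rightarrow> 'h \<Rightarrow> 'h) \<Rightarrow> ('a \<Rightarrow> 'h \<Rightarrow> 'h) \<Rightarrow> bool" where
  "bimod_star_rep lact ract xst D \<theta> \<rho> \<longleftrightarrow>
     star_rep D \<rho> \<and> nondegenerate D \<rho> \<and>
     (\<forall>x y. \<forall>v\<in>D. \<theta> (x + y) v = \<theta> x v + \<theta> y v) \<and>
     (\<forall>c x. \<forall>v\<in>D. \<theta> (scaleC c x) v = scaleC c (\<theta> x v)) \<and>
     (\<forall>x. Lplus D (\<theta> x)) \<and>
     (\<forall>x. \<forall>\<psi>\<in>D. \<theta> (xst x) \<psi> = adjoint D (\<theta> x) \<psi>) \<and>
     (\<forall>a b x. \<forall>\<phi>\<in>D. \<forall>\<psi>\<in>D.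
        cinner (\<theta> (lact a (ract x b)) \<phi>) \<psi> = cinner (\<theta> x (\<rho> b \<phi>)) (\<rho> (star a) \<psi>))"

text \<open>q is the quotient map A -> D_f = A/N_f composed with the isometric embedding of
  D_f into its Hilbert space completion H_f (the type 'h): q is linear,
  <q a, q b> = f(b^+ a) (so ker q = N_f and the inner product is the GNS one), and
  D_f = range q is dense in H_f.\<close>
definition gns_completion :: "('a::cstar_algebra \<Rightarrow> complex) \<Rightarrow> ('a \<Rightarrow> 'h::chilbert) \<Rightarrow> bool" where
  "gns_completion f q \<longleftrightarrow>
     (\<forall>a b. q (a + b) = q a + q b) \<and> (\<forall>c a. q (scaleC c a) = scaleC c (q a)) \<and>
     (\<forall>a b. cinner (q a) (q b) = f (star b * a)) \<and> cdense (range q)"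

text \<open>rho_f(a)(b + N_f) = ab + N_f.\<close>
definition gns_rep :: "('a::cstar_algebra \<Rightarrow> 'h::chilbert) \<Rightarrow> 'a \<Rightarrow> 'h \<Rightarrow> 'h" where
  "gns_rep q a v = q (a * (SOME b. q b = v))"

definition gns_vec :: "('a::cstar_algebra \<Rightarrow> 'h::chilbert) \<Rightarrow> 'h" where
  "gns_vec q = q 1"

definition cunitary :: "('h::chilbert \<Rightarrow> 'k::chilbert) \<Rightarrow> bool" where
  "cunitary U \<longleftrightarrow> bij U \<and> (\<forall>u v. U (u + v) = U u + U v) \<and> (\<forall>c u. U (scaleC c u) = scaleC c (U u)) \<and>
     (\<forall>u v. cinner (U u) (U v) = cinner u v)"

end

theory Submission
  imports Defs
begin

text \<open>For fixed \<open>x\<close> and \<open>b\<close>, the bound makes \<open>c \<mapsto> F(c\<^sup>+ \<cdot> x \<cdot> b)\<close> a bounded antilinear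
  functional of \<open>q c = c + N\<^sub>f\<close>; it vanishes on \<open>N\<^sub>f\<close> in \<open>b\<close> as well, by hermiticity. Riesz
  representation in \<open>H\<^sub>f\<close> therefore yields a vector \<open>\<theta>\<^sub>F(x) q b\<close> with
  \<open>\<langle>\<theta>\<^sub>F(x) q b, q c\<rangle> = F(c\<^sup>+ \<cdot> x \<cdot> b)\<close>, and the bimodule identities of \<open>F\<close> turn into the
  defining properties of a *-representation. For uniqueness, the cyclic vectors identify
  \<open>q a \<mapsto> \<rho>(a)\<psi>\<close> as an isometry between dense subspaces, which extends to a unitary; it
  intertwines \<open>\<theta>\<close> and \<open>\<theta>\<^sub>F\<close> because both have the same matrix coefficients
  \<open>F(c\<^sup>+ \<cdot> x \<cdot> b)\<close> against the dense set \<open>\<rho>(A)\<psi>\<close>.\<close>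

section \<open>Inner product spaces\<close>

lemma module_scaleC: "module (scaleC :: complex \<Rightarrow> 'a::cvec \<Rightarrow> 'a)"
  by unfold_locales (rule scaleC_add_right scaleC_add_left scaleC_scaleC scaleC_one)+

lemmas scaleC_diff_right = module.scale_right_diff_distrib[OF module_scaleC]

lemma cinner_additive_left: "additive (\<lambda>x. cinner x y)"
  by unfold_locales (fact cinner_add_left)

lemma cinner_zero_left [simp]: "cinner 0 y = 0"
  and cinner_diff_left: "cinner (x - z) y = cinner x y - cinner z y"
  using additive.zero[OF cinner_additive_left] additive.diff[OF cinner_additive_left] by blast+

lemma cinner_add_right: "cinner x (y + z) = cinner x y + cinner x z"
  by (subst (1 2 3) cinner_commute) (simp add: cinner_add_left)

lemma cinner_scaleC_right: "cinner x (scaleC c y) = cnj c * cinner x y"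
  by (subst (1 2) cinner_commute) (simp add: cinner_scaleC_left)

lemma cinner_zero_right [simp]: "cinner x 0 = 0"
  by (subst cinner_commute) simp

lemma cinner_diff_right: "cinner x (y - z) = cinner x y - cinner x z"
  by (subst (1 2 3) cinner_commute) (simp add: cinner_diff_left)

lemma cinner_self_real: "cinner x x = complex_of_real (Re (cinner x x))"
  using cinner_commute[of x x] by (simp add: complex_eq_iff)

lemma cinner_self_eq_zero [simp]: "cinner x x = 0 \<longleftrightarrow> x = 0"
  using cinner_eq_zero by auto

lemma Cauchy_Schwarz_cinner:
  "(cmod (cinner x y))\<^sup>2 \<le> Re (cinner x x) * Re (cinner y y)"
proof (cases "y = 0")
  case True
  then show ?thesis by simp
next
  case False
  define r where "r = Re (cinner y y)"
  define z where "z = cinner x y"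
  have yy: "cinner y y = complex_of_real r"
    unfolding r_def by (rule cinner_self_real)
  have r: "r > 0"
    using False yy cinner_ge_zero[of y] unfolding r_def by (metis cinner_self_eq_zero less_eq_real_def of_real_0)
  \<comment> \<open>expand \<open>0 \<le> \<langle>x - t y, x - t y\<rangle>\<close> at the optimal \<open>t = z / r\<close>\<close>
  let ?v = "x - scaleC (z / r) y"
  have "cinner ?v ?v = cinner x x - cnj (z / r) * z - (z / r) * cnj z + (z / r) * cnj (z / r) * r"
    by (simp add: cinner_diff_left cinner_diff_right cinner_scaleC_left cinner_scaleC_right
        yy z_def cinner_commute[of y x] algebra_simps)
  also have "\<dots> = cinner x x - complex_of_real ((cmod z)\<^sup>2 / r)"
    using r complex_norm_square[of z] by (simp add: field_simps)
  finally have "0 \<le> Re (cinner x x) - (cmod z)\<^sup>2 / r"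
    using cinner_ge_zero[of ?v] by simp
  then show ?thesis
    using r unfolding z_def r_def by (simp add: field_simps mult.commute)
qed

lemma cnorm_nonneg: "0 \<le> cnorm x"
  by (simp add: cnorm_def cinner_ge_zero)

lemma cnorm_power2: "(cnorm x)\<^sup>2 = Re (cinner x x)"
  using cinner_ge_zero[of x] by (simp add: cnorm_def)

lemma cnorm_eq_zero [simp]: "cnorm x = 0 \<longleftrightarrow> x = 0"
  using cinner_self_real[of x] by (auto simp: cnorm_def)

lemma norm_cinner_le: "cmod (cinner x y) \<le> cnorm x * cnorm y"
proof -
  have "(cmod (cinner x y))\<^sup>2 \<le> (cnorm x * cnorm y)\<^sup>2"
    using Cauchy_Schwarz_cinner[of x y] by (simp add: power_mult_distrib cnorm_power2)
  then show ?thesis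
    by (meson cnorm_nonneg mult_nonneg_nonneg power2_le_imp_le)
qed

lemma cnorm_triangle: "cnorm (x + y) \<le> cnorm x + cnorm y"
proof -
  have "(cnorm (x + y))\<^sup>2 = (cnorm x)\<^sup>2 + (cnorm y)\<^sup>2 + 2 * Re (cinner x y)"
    by (simp add: cnorm_power2 cinner_add_left cinner_add_right cinner_commute[of y x])
  also have "\<dots> \<le> (cnorm x + cnorm y)\<^sup>2"
    using norm_cinner_le[of x y] abs_Re_le_cmod[of "cinner x y"]
    by (simp add: power2_eq_square algebra_simps)
  finally show ?thesis
    by (meson add_nonneg_nonneg cnorm_nonneg power2_le_imp_le)
qed

lemma cnorm_minus_commute: "cnorm (x - y) = cnorm (y - x)"
  by (simp add: cnorm_def cinner_diff_left cinner_diff_right algebra_simps)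

lemma cnorm_triangle_diff: "cnorm (x - z) \<le> cnorm (x - y) + cnorm (y - z)"
  using cnorm_triangle[of "x - y" "y - z"] by simp

lemma cnorm_scaleC: "cnorm (scaleC c x) = cmod c * cnorm x"
proof -
  have "cinner (scaleC c x) (scaleC c x) = complex_of_real ((cmod c)\<^sup>2 * Re (cinner x x))"
    using complex_norm_square[of c] cinner_self_real[of x]
    by (simp add: cinner_scaleC_left cinner_scaleC_right mult.commute mult.left_commute)
  then show ?thesis
    by (simp add: cnorm_def real_sqrt_mult)
qed

section \<open>Convergence in the inner product norm\<close>

definition ctendsto :: "(nat \<Rightarrow> 'a::cinner_space) \<Rightarrow> 'a \<Rightarrow> bool" where
  "ctendsto s l \<longleftrightarrow> (\<lambda>n. cnorm (s n - l)) \<longlonglongrightarrow> 0"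

definition cCauchy :: "(nat \<Rightarrow> 'a::cinner_space) \<Rightarrow> bool" where
  "cCauchy s \<longleftrightarrow> (\<forall>e>0. \<exists>N. \<forall>m\<ge>N. \<forall>n\<ge>N. cnorm (s m - s n) < e)"

lemma ctendsto_bound:
  assumes "\<And>n. cnorm (s n - l) \<le> g n" and "g \<longlonglongrightarrow> 0"
  shows "ctendsto s l"
  unfolding ctendsto_def
  by (rule tendsto_sandwich[OF _ _ tendsto_const assms(2)]) (simp_all add: cnorm_nonneg assms(1))

lemma cCauchy_ctendsto:
  fixes s :: "nat \<Rightarrow> 'h::chilbert"
  assumes "cCauchy s"
  obtains l where "ctendsto s l"
proof -
  obtain l where l: "\<forall>e>0. \<exists>N. \<forall>n\<ge>N. cnorm (s n - l) < e"
    using chilbert_class.complete[of s] assms unfolding cCauchy_def cnorm_def by blast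
  have "ctendsto s l"
    unfolding ctendsto_def
    by (rule LIMSEQ_I) (use l in \<open>auto simp: cnorm_nonneg\<close>)
  then show ?thesis ..
qed

lemma ctendsto_cCauchy:
  assumes "ctendsto s l"
  shows "cCauchy s"
  unfolding cCauchy_def
proof (intro allI impI)
  fix e :: real
  assume "e > 0"
  then obtain N where N: "\<And>n. n \<ge> N \<Longrightarrow> cnorm (s n - l) < e / 2"
    using LIMSEQ_D[OF assms[unfolded ctendsto_def], of "e / 2"] by (auto simp: cnorm_nonneg)
  have "cnorm (s m - s n) < e" if "m \<ge> N" "n \<ge> N" for m n
    using cnorm_triangle_diff[of "s m" "s n" l] cnorm_minus_commute[of l "s n"] N[OF that(1)] N[OF that(2)]
    by linarith
  then show "\<exists>N. \<forall>m\<ge>N. \<forall>n\<ge>N. cnorm (s m - s n) < e"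
    by blast
qed

lemma ctendsto_const: "ctendsto (\<lambda>n. l) l"
  by (simp add: ctendsto_def cnorm_def)

lemma ctendsto_add:
  assumes "ctendsto s l" and "ctendsto t m"
  shows "ctendsto (\<lambda>n. s n + t n) (l + m)"
proof (rule ctendsto_bound)
  show "cnorm (s n + t n - (l + m)) \<le> cnorm (s n - l) + cnorm (t n - m)" for n
    using cnorm_triangle[of "s n - l" "t n - m"] by (simp add: algebra_simps)
  show "(\<lambda>n. cnorm (s n - l) + cnorm (t n - m)) \<longlonglongrightarrow> 0"
    using tendsto_add[OF assms[unfolded ctendsto_def]] by simp
qed

lemma ctendsto_scaleC:
  assumes "ctendsto s l"
  shows "ctendsto (\<lambda>n. scaleC c (s n)) (scaleC c l)"
proof (rule ctendsto_bound)
  show "cnorm (scaleC c (s n) - scaleC c l) \<le> cmod c * cnorm (s n - l)" for n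
    by (simp add: scaleC_diff_right[symmetric] cnorm_scaleC)
  show "(\<lambda>n. cmod c * cnorm (s n - l)) \<longlonglongrightarrow> 0"
    using tendsto_mult_right_zero[OF assms[unfolded ctendsto_def]] .
qed

lemma ctendsto_unique:
  assumes "ctendsto s l" and "ctendsto s m"
  shows "l = m"
proof -
  have "cnorm (l - m) \<le> cnorm (s n - l) + cnorm (s n - m)" for n
    using cnorm_triangle_diff[of l m "s n"] cnorm_minus_commute[of l "s n"] by simp
  moreover have "(\<lambda>n. cnorm (s n - l) + cnorm (s n - m)) \<longlonglongrightarrow> 0"
    using tendsto_add[OF assms[unfolded ctendsto_def]] by simp
  ultimately have "cnorm (l - m) \<le> 0"
    by (intro tendsto_le[OF _ _ tendsto_const, of sequentially]) auto
  then show ?thesis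
    using cnorm_nonneg[of "l - m"] by simp
qed

lemma ctendsto_cinner:
  assumes s: "ctendsto s l" and t: "ctendsto t m"
  shows "(\<lambda>n. cinner (s n) (t n)) \<longlonglongrightarrow> cinner l m"
proof -
  let ?a = "\<lambda>n. cnorm (s n - l)" and ?b = "\<lambda>n. cnorm (t n - m)"
  have bound: "norm (cinner (s n) (t n) - cinner l m) \<le> ?a n * (?b n + cnorm m) + cnorm l * ?b n" for n
  proof -
    have eq: "cinner (s n) (t n) - cinner l m = cinner (s n - l) (t n) + cinner l (t n - m)"
      by (simp add: cinner_diff_left cinner_diff_right)
    have "?a n * cnorm (t n) \<le> ?a n * (?b n + cnorm m)"
      using cnorm_triangle[of "t n - m" m] by (simp add: cnorm_nonneg mult_left_mono)
    then show ?thesis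
      unfolding eq using norm_cinner_le[of "s n - l" "t n"] norm_cinner_le[of l "t n - m"]
        norm_triangle_ineq[of "cinner (s n - l) (t n)" "cinner l (t n - m)"]
      by linarith
  qed
  have "(\<lambda>n. ?a n * (?b n + cnorm m) + cnorm l * ?b n) \<longlonglongrightarrow> 0 * (0 + cnorm m) + cnorm l * 0"
    using s t unfolding ctendsto_def
    by (intro tendsto_add tendsto_mult tendsto_const)
  then have lim: "(\<lambda>n. ?a n * (?b n + cnorm m) + cnorm l * ?b n) \<longlonglongrightarrow> 0"
    by simp
  have "(\<lambda>n. norm (cinner (s n) (t n) - cinner l m)) \<longlonglongrightarrow> 0"
    by (rule tendsto_sandwich[OF _ _ tendsto_const lim]) (simp_all add: bound)
  then show ?thesis
    by (simp add: tendsto_norm_zero_iff LIM_zero_iff)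
qed

lemma cdense_range_ctendsto:
  assumes "cdense (range g)"
  obtains s where "ctendsto (\<lambda>n. g (s n)) v"
proof -
  have "\<exists>a. cnorm (v - g a) < inverse (real (Suc n))" for n
    using assms unfolding cdense_def by (metis imageE inverse_positive_iff_positive of_nat_0_less_iff zero_less_Suc)
  then obtain s where s: "\<And>n. cnorm (v - g (s n)) < inverse (real (Suc n))"
    by metis
  have "cnorm (g (s n) - v) \<le> inverse (real (Suc n))" for n
    using s[of n] cnorm_minus_commute[of v "g (s n)"] by linarith
  then have "ctendsto (\<lambda>n. g (s n)) v"
    using LIMSEQ_inverse_real_of_nat by (rule ctendsto_bound)
  then show ?thesis ..
qed

lemma cdense_range_cinner_eqI:
  assumes "cdense (range g)" and "\<And>a. cinner u (g a) = cinner v (g a)"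
  shows "u = v"
proof -
  obtain s where s: "ctendsto (\<lambda>n. g (s n)) (u - v)"
    using cdense_range_ctendsto[OF assms(1)] .
  have "(\<lambda>n. cinner (u - v) (g (s n))) \<longlonglongrightarrow> cinner (u - v) (u - v)"
    by (rule ctendsto_cinner[OF ctendsto_const s])
  moreover have "cinner (u - v) (g (s n)) = 0" for n
    using assms(2) by (simp add: cinner_diff_left)
  ultimately have "(\<lambda>n. 0) \<longlonglongrightarrow> cinner (u - v) (u - v)"
    by simp
  then have "cinner (u - v) (u - v) = 0"
    by (simp add: LIMSEQ_const_iff)
  then show ?thesis
    by simp
qed

section \<open>Riesz representation of bounded antilinear functionals\<close>

text \<open>The slack \<open>+ 1\<close> covers the degenerate case \<open>N = 0\<close> without a case split.\<close>
lemma nonneg_quadratic_coeff_bound: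
  fixes N b e :: real
  assumes N: "0 \<le> N" and nonneg: "\<And>t. 0 \<le> t\<^sup>2 * N + 2 * t * b + e"
  shows "b\<^sup>2 \<le> e * (N + 1)"
proof -
  define t where "t = - b / (N + 1)"
  have t: "t * (N + 1) = - b"
    unfolding t_def using N by simp
  have "0 \<le> (N + 1)\<^sup>2 * (t\<^sup>2 * N + 2 * t * b + e)"
    using nonneg[of t] by simp
  also have "\<dots> = (t * (N + 1))\<^sup>2 * N + 2 * (t * (N + 1)) * (N + 1) * b + e * (N + 1)\<^sup>2"
    by (simp add: power2_eq_square algebra_simps)
  also have "\<dots> = e * (N + 1)\<^sup>2 - b\<^sup>2 * (N + 2)"
    unfolding t by (simp add: power2_eq_square algebra_simps)
  finally have "b\<^sup>2 * (N + 2) \<le> e * (N + 1)\<^sup>2"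
    by simp
  also have "\<dots> \<le> e * (N + 1) * (N + 2)"
    using nonneg[of 0] N mult_left_mono[of "N + 1" "N + 2" "e * (N + 1)"]
    by (simp add: power2_eq_square mult.assoc)
  finally show ?thesis
    using N by (simp add: mult_le_cancel_right)
qed

locale bounded_antilinear_functional =
  fixes g :: "'b::cvec \<Rightarrow> 'h::chilbert" and L :: "'b \<Rightarrow> complex" and C :: real
  assumes g_add: "g (a + b) = g a + g b"
    and g_scaleC: "g (scaleC c a) = scaleC c (g a)"
    and L_add: "L (a + b) = L a + L b"
    and L_scaleC: "L (scaleC c a) = cnj c * L a"
    and C_nonneg: "0 \<le> C"
    and L_bound: "(cmod (L a))\<^sup>2 \<le> C * (cnorm (g a))\<^sup>2"
begin

text \<open>If \<open>L a = \<langle>w, g a\<rangle>\<close>, then \<open>energy a = \<parallel>g a - w\<parallel>\<^sup>2 - \<parallel>w\<parallel>\<^sup>2\<close>; so \<open>w\<close> is found as the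
  limit of \<open>g\<close> along a minimising sequence of the energy.\<close>

definition energy :: "'b \<Rightarrow> real" where
  "energy a = (cnorm (g a))\<^sup>2 - 2 * Re (L a)"

lemma energy_ge: "- C \<le> energy a"
proof -
  have "(cmod (L a))\<^sup>2 \<le> (sqrt C * cnorm (g a))\<^sup>2"
    using L_bound C_nonneg by (simp add: power_mult_distrib)
  then have "cmod (L a) \<le> sqrt C * cnorm (g a)"
    by (rule power2_le_imp_le) (simp add: C_nonneg cnorm_nonneg)
  then have "Re (L a) \<le> sqrt C * cnorm (g a)"
    using complex_Re_le_cmod[of "L a"] by linarith
  moreover have "0 \<le> (cnorm (g a) - sqrt C)\<^sup>2"
    by simp
  ultimately show ?thesis
    using C_nonneg unfolding energy_def by (simp add: power2_eq_square algebra_simps)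
qed

definition energy_inf :: real where
  "energy_inf = Inf (range energy)"

lemma energy_inf_le: "energy_inf \<le> energy a"
  unfolding energy_inf_def by (rule cInf_lower) (auto intro: bdd_belowI2 energy_ge)

lemma minimizing_sequence:
  obtains a where "\<And>k. energy (a k) \<le> energy_inf + inverse (real (Suc k))"
proof -
  have bdd: "bdd_below (range energy)"
    by (auto intro: bdd_belowI2 energy_ge)
  have "\<exists>a. energy a < energy_inf + inverse (real (Suc k))" for k
    using cInf_less_iff[OF _ bdd, of "energy_inf + inverse (real (Suc k))"]
    unfolding energy_inf_def by auto
  then show ?thesis
    using that less_imp_le by metis
qed

lemma cnorm_diff_energy:
  "(cnorm (g x - g y))\<^sup>2 = 2 * energy x + 2 * energy y - 4 * energy (scaleC (1/2) (x + y))"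
proof -
  have "cinner (g x - g y) (g x - g y) + cinner (g x + g y) (g x + g y)
      = 2 * cinner (g x) (g x) + 2 * cinner (g y) (g y)"
    by (simp add: cinner_add_left cinner_add_right cinner_diff_left cinner_diff_right)
  moreover have "cinner (g (scaleC (1/2) (x + y))) (g (scaleC (1/2) (x + y)))
      = (1/4) * cinner (g x + g y) (g x + g y)"
    by (simp add: g_add g_scaleC cinner_scaleC_left cinner_scaleC_right)
  ultimately show ?thesis
    unfolding energy_def cnorm_power2
    by (simp add: L_add L_scaleC complex_eq_iff algebra_simps)
qed

lemma near_minimizers_close:
  assumes "energy x \<le> energy_inf + e" and "energy y \<le> energy_inf + e"
  shows "(cnorm (g x - g y))\<^sup>2 \<le> 4 * e"
  using assms cnorm_diff_energy[of x y] energy_inf_le[of "scaleC (1/2) (x + y)"] by linarith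

lemma energy_shift:
  "energy (x + scaleC (complex_of_real t) y)
     = energy x + 2 * t * (Re (cinner (g x) (g y)) - Re (L y)) + t\<^sup>2 * (cnorm (g y))\<^sup>2"
proof -
  have "Re (cinner (g x + scaleC (complex_of_real t) (g y)) (g x + scaleC (complex_of_real t) (g y)))
      = Re (cinner (g x) (g x)) + 2 * t * Re (cinner (g x) (g y)) + t\<^sup>2 * Re (cinner (g y) (g y))"
    using cinner_commute[of "g y" "g x"]
    by (simp add: cinner_add_left cinner_add_right cinner_scaleC_left cinner_scaleC_right
        power2_eq_square algebra_simps)
  then show ?thesis
    unfolding energy_def cnorm_power2 by (simp add: g_add g_scaleC L_add L_scaleC algebra_simps)
qed

lemma near_minimizer_Re:
  assumes "energy x \<le> energy_inf + e"
  shows "(Re (cinner (g x) (g y)) - Re (L y))\<^sup>2 \<le> e * ((cnorm (g y))\<^sup>2 + 1)"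
proof (rule nonneg_quadratic_coeff_bound)
  fix t :: real
  show "0 \<le> t\<^sup>2 * (cnorm (g y))\<^sup>2 + 2 * t * (Re (cinner (g x) (g y)) - Re (L y)) + e"
    using assms energy_inf_le[of "x + scaleC (complex_of_real t) y"] unfolding energy_shift
    by linarith
qed simp

lemma cCauchy_minimizing:
  assumes a: "\<And>k. energy (a k) \<le> energy_inf + inverse (real (Suc k))"
  shows "cCauchy (\<lambda>k. g (a k))"
  unfolding cCauchy_def
proof (intro allI impI)
  fix e :: real
  assume "e > 0"
  then obtain K where K: "inverse (real (Suc K)) < e\<^sup>2 / 4"
    using reals_Archimedean[of "e\<^sup>2 / 4"] by auto
  have "cnorm (g (a k) - g (a j)) < e" if "K \<le> k" "K \<le> j" for k j
  proof -
    have "inverse (real (Suc k)) \<le> inverse (real (Suc K))" "inverse (real (Suc j)) \<le> inverse (real (Suc K))"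
      using that by (simp_all add: le_imp_inverse_le)
    then have "(cnorm (g (a k) - g (a j)))\<^sup>2 < e\<^sup>2"
      using near_minimizers_close[of "a k" "inverse (real (Suc K))" "a j"] a[of k] a[of j] K
      by linarith
    then show ?thesis
      using \<open>e > 0\<close> by (simp add: power_less_imp_less_base)
  qed
  then show "\<exists>N. \<forall>m\<ge>N. \<forall>n\<ge>N. cnorm (g (a m) - g (a n)) < e"
    by blast
qed

lemma Re_cinner_minimizing_limit:
  assumes a: "\<And>k. energy (a k) \<le> energy_inf + inverse (real (Suc k))"
    and w: "ctendsto (\<lambda>k. g (a k)) w"
  shows "Re (cinner w (g y)) = Re (L y)"
proof -
  let ?\<beta> = "\<lambda>k. Re (cinner (g (a k)) (g y)) - Re (L y)"
  let ?bound = "\<lambda>k. sqrt (inverse (real (Suc k)) * ((cnorm (g y))\<^sup>2 + 1))"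
  have "?bound \<longlonglongrightarrow> sqrt 0"
    by (intro tendsto_real_sqrt tendsto_mult_left_zero LIMSEQ_inverse_real_of_nat)
  then have bound: "?bound \<longlonglongrightarrow> 0"
    by simp
  have "\<bar>?\<beta> k\<bar> \<le> ?bound k" for k
    using real_sqrt_le_mono[OF near_minimizer_Re[OF a[of k], of y]] by simp
  then have "(\<lambda>k. \<bar>?\<beta> k\<bar>) \<longlonglongrightarrow> 0"
    by (intro tendsto_sandwich[OF _ _ tendsto_const bound]) simp_all
  then have "(\<lambda>k. Re (cinner (g (a k)) (g y))) \<longlonglongrightarrow> Re (L y)"
    by (simp add: tendsto_rabs_zero_iff LIM_zero_iff)
  moreover have "(\<lambda>k. Re (cinner (g (a k)) (g y))) \<longlonglongrightarrow> Re (cinner w (g y))"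
    by (intro tendsto_Re ctendsto_cinner[OF w ctendsto_const])
  ultimately show ?thesis
    using LIMSEQ_unique by blast
qed

lemma riesz_representation: "\<exists>w. \<forall>a. cinner w (g a) = L a"
proof -
  obtain a where a: "\<And>k. energy (a k) \<le> energy_inf + inverse (real (Suc k))"
    using minimizing_sequence by blast
  obtain w where w: "ctendsto (\<lambda>k. g (a k)) w"
    using cCauchy_minimizing[OF a] by (rule cCauchy_ctendsto)
  have "cinner w (g y) = L y" for y
  proof (rule complex_eqI)
    show "Re (cinner w (g y)) = Re (L y)"
      using Re_cinner_minimizing_limit[OF a w] .
    show "Im (cinner w (g y)) = Im (L y)"
      using Re_cinner_minimizing_limit[OF a w, of "scaleC \<i> y"]
      by (simp add: g_scaleC L_scaleC cinner_scaleC_right)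
  qed
  then show ?thesis
    by blast
qed

end

section \<open>Extension of isometries with dense ranges to unitaries\<close>

locale isometric_dense_ranges =
  fixes q :: "'b::cvec \<Rightarrow> 'h::chilbert" and p :: "'b \<Rightarrow> 'k::chilbert"
  assumes q_add: "q (a + b) = q a + q b"
    and q_scaleC: "q (scaleC c a) = scaleC c (q a)"
    and p_add: "p (a + b) = p a + p b"
    and p_scaleC: "p (scaleC c a) = scaleC c (p a)"
    and cinner_p: "cinner (p a) (p b) = cinner (q a) (q b)"
    and dense_q: "cdense (range q)"
    and dense_p: "cdense (range p)"
begin

lemma cnorm_p_diff: "cnorm (p a - p b) = cnorm (q a - q b)"
proof -
  have "p (a - b) = p a - p b" "q (a - b) = q a - q b"
    by (simp_all add: additive.diff additive.intro p_add q_add)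
  then show ?thesis
    unfolding cnorm_def by (metis cinner_p)
qed

lemma cCauchy_p:
  assumes "ctendsto (\<lambda>n. q (s n)) v"
  shows "cCauchy (\<lambda>n. p (s n))"
  using ctendsto_cCauchy[OF assms] unfolding cCauchy_def cnorm_p_diff .

definition extension :: "'h \<Rightarrow> 'k" where
  "extension v = (SOME l. \<exists>s. ctendsto (\<lambda>n. q (s n)) v \<and> ctendsto (\<lambda>n. p (s n)) l)"

lemma ctendsto_extension:
  assumes s: "ctendsto (\<lambda>n. q (s n)) v"
  shows "ctendsto (\<lambda>n. p (s n)) (extension v)"
proof -
  have "\<exists>l s. ctendsto (\<lambda>n. q (s n)) v \<and> ctendsto (\<lambda>n. p (s n)) l"
    using s cCauchy_ctendsto[OF cCauchy_p[OF s]] by blast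
  then have "\<exists>t. ctendsto (\<lambda>n. q (t n)) v \<and> ctendsto (\<lambda>n. p (t n)) (extension v)"
    unfolding extension_def by (rule someI_ex)
  then obtain t where t: "ctendsto (\<lambda>n. q (t n)) v" "ctendsto (\<lambda>n. p (t n)) (extension v)"
    by blast
  \<comment> \<open>\<open>cnorm (p (s n) - p (t n)) = cnorm (q (s n) - q (t n)) \<longrightarrow> 0\<close>, so both \<open>p\<close>-sequences share a limit\<close>
  have "cnorm (p (s n) - extension v) \<le> cnorm (q (s n) - v) + cnorm (q (t n) - v) + cnorm (p (t n) - extension v)"
    for n
    using cnorm_triangle_diff[of "p (s n)" "extension v" "p (t n)"] cnorm_p_diff[of "s n" "t n"]
      cnorm_triangle_diff[of "q (s n)" "q (t n)" v] cnorm_minus_commute[of v "q (t n)"]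
    by linarith
  moreover have "(\<lambda>n. cnorm (q (s n) - v) + cnorm (q (t n) - v) + cnorm (p (t n) - extension v)) \<longlonglongrightarrow> 0 + 0 + 0"
    using s t unfolding ctendsto_def by (intro tendsto_add)
  ultimately show ?thesis
    by (intro ctendsto_bound) simp_all
qed

lemma extension_q: "extension (q a) = p a"
  using ctendsto_unique[OF ctendsto_extension[OF ctendsto_const] ctendsto_const] .

lemma extension_add: "extension (u + v) = extension u + extension v"
proof -
  obtain s t where s: "ctendsto (\<lambda>n. q (s n)) u" and t: "ctendsto (\<lambda>n. q (t n)) v"
    using cdense_range_ctendsto[OF dense_q] by metis
  have "ctendsto (\<lambda>n. q (s n + t n)) (u + v)"
    unfolding q_add by (rule ctendsto_add[OF s t])
  then have "ctendsto (\<lambda>n. p (s n + t n)) (extension (u + v))"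
    by (rule ctendsto_extension)
  then have "ctendsto (\<lambda>n. p (s n) + p (t n)) (extension (u + v))"
    unfolding p_add .
  then show ?thesis
    using ctendsto_unique ctendsto_add[OF ctendsto_extension[OF s] ctendsto_extension[OF t]] by blast
qed

lemma extension_scaleC: "extension (scaleC c v) = scaleC c (extension v)"
proof -
  obtain s where s: "ctendsto (\<lambda>n. q (s n)) v"
    using cdense_range_ctendsto[OF dense_q] by metis
  have "ctendsto (\<lambda>n. q (scaleC c (s n))) (scaleC c v)"
    unfolding q_scaleC by (rule ctendsto_scaleC[OF s])
  then have "ctendsto (\<lambda>n. p (scaleC c (s n))) (extension (scaleC c v))"
    by (rule ctendsto_extension)
  then have "ctendsto (\<lambda>n. scaleC c (p (s n))) (extension (scaleC c v))"
    unfolding p_scaleC .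
  then show ?thesis
    using ctendsto_unique ctendsto_scaleC[OF ctendsto_extension[OF s]] by blast
qed

lemma cinner_extension: "cinner (extension u) (extension v) = cinner u v"
proof -
  obtain s t where s: "ctendsto (\<lambda>n. q (s n)) u" and t: "ctendsto (\<lambda>n. q (t n)) v"
    using cdense_range_ctendsto[OF dense_q] by metis
  have "(\<lambda>n. cinner (p (s n)) (p (t n))) \<longlonglongrightarrow> cinner (extension u) (extension v)"
    by (rule ctendsto_cinner[OF ctendsto_extension[OF s] ctendsto_extension[OF t]])
  moreover have "(\<lambda>n. cinner (p (s n)) (p (t n))) \<longlonglongrightarrow> cinner u v"
    unfolding cinner_p by (rule ctendsto_cinner[OF s t])
  ultimately show ?thesis
    by (rule LIMSEQ_unique)
qed

lemma inj_extension: "inj extension"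
proof (rule injI)
  fix u v
  assume "extension u = extension v"
  then have "cinner (extension u - extension v) (extension u - extension v) = 0"
    by simp
  then have "cinner (u - v) (u - v) = 0"
    by (simp add: cinner_diff_left cinner_diff_right cinner_extension)
  then show "u = v"
    by simp
qed

lemma surj_extension: "surj extension"
proof -
  have "k \<in> range extension" for k
  proof -
    obtain s where s: "ctendsto (\<lambda>n. p (s n)) k"
      using cdense_range_ctendsto[OF dense_p] by metis
    have "cCauchy (\<lambda>n. q (s n))"
      using ctendsto_cCauchy[OF s] unfolding cCauchy_def cnorm_p_diff .
    then obtain v where "ctendsto (\<lambda>n. q (s n)) v"
      by (rule cCauchy_ctendsto)
    then have "extension v = k"
      using ctendsto_unique[OF ctendsto_extension s] by blast
    then show ?thesis
      by blast
  qed
  then show ?thesis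
    by blast
qed

lemma cunitary_extension: "cunitary extension"
  unfolding cunitary_def bij_def
  using inj_extension surj_extension extension_add extension_scaleC cinner_extension by blast

end

lemma isometry_extends_to_unitary:
  assumes "isometric_dense_ranges q p"
  obtains U where "cunitary U" and "\<And>a. U (q a) = p a"
  using isometric_dense_ranges.cunitary_extension[OF assms]
    isometric_dense_ranges.extension_q[OF assms] by blast

section \<open>The GNS construction\<close>

locale gns_construction =
  fixes f :: "'a::cstar_algebra \<Rightarrow> complex" and q :: "'a \<Rightarrow> 'h::chilbert"
  assumes gns: "gns_completion f q"
begin

lemma
  shows q_add: "q (a + b) = q a + q b"
    and q_scaleC: "q (scaleC c a) = scaleC c (q a)"
    and cinner_q: "cinner (q a) (q b) = f (star b * a)"
    and dense_q: "cdense (range q)"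
  using gns unfolding gns_completion_def by blast+

lemma q_diff: "q (a - b) = q a - q b"
  by (simp add: additive.diff additive.intro q_add)

text \<open>\<open>{a. q a = 0}\<close> is the left ideal \<open>N\<^sub>f\<close>: \<open>f ((a d)\<^sup>+ (a d)) = f (d\<^sup>+ (a\<^sup>+ a d)) = \<langle>q (a\<^sup>+ a d), q d\<rangle>\<close>.\<close>
lemma q_mult_cong:
  assumes "q b = q b'"
  shows "q (a * b) = q (a * b')"
proof -
  have "q (a * (b - b')) = 0"
    using cinner_q[of "a * (b - b')" "a * (b - b')"] cinner_q[of "b - b'" "star a * a * (b - b')"]
      assms by (simp add: q_diff star_mult star_star mult.assoc)
  then show ?thesis
    by (simp add: right_diff_distrib q_diff)
qed

lemma gns_rep_q [simp]: "gns_rep q a (q b) = q (a * b)"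
  unfolding gns_rep_def by (rule q_mult_cong) (rule someI, rule refl)

lemma gns_rep_vec [simp]: "gns_rep q b (gns_vec q) = q b"
  by (simp add: gns_vec_def)

lemma q_eqI:
  assumes "\<And>c. cinner u (q c) = cinner v (q c)"
  shows "u = v"
  using cdense_range_cinner_eqI[OF dense_q] assms .

lemma star_rep_gns: "star_rep (range q) (gns_rep q)"
  unfolding star_rep_def clinear_on_def
  by (auto simp: q_add[symmetric] q_scaleC[symmetric] cinner_q distrib_left distrib_right
      scaleC_mult_left[symmetric] scaleC_mult_right[symmetric] mult.assoc star_mult star_star)

lemma nondegenerate_gns: "nondegenerate (range q) (gns_rep q)"
  by (auto simp: nondegenerate_def)

lemma gns_unitary_equivalence:
  assumes rep: "star_rep D \<rho>" and "\<psi> \<in> D" and cyclic: "range (\<lambda>a. \<rho> a \<psi>) = D"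
    and "cdense D" and f: "\<And>a. f a = cinner (\<rho> a \<psi>) \<psi>"
  obtains U where "cunitary U" and "\<And>a. U (q a) = \<rho> a \<psi>"
proof -
  have "cinner (\<rho> a \<psi>) (\<rho> b \<psi>) = cinner (q a) (q b)" for a b
    using rep \<open>\<psi> \<in> D\<close> unfolding star_rep_def cinner_q f by (simp add: star_star)
  then have "isometric_dense_ranges q (\<lambda>a. \<rho> a \<psi>)"
    using rep \<open>\<psi> \<in> D\<close> \<open>cdense D\<close> unfolding star_rep_def
    by unfold_locales (simp_all add: q_add q_scaleC dense_q cyclic)
  then show ?thesis
    using that by (rule isometry_extends_to_unitary)
qed

lemma bimodule_rep_unique:
  fixes \<theta>F :: "'x \<Rightarrow> 'h \<Rightarrow> 'h" and \<theta> :: "'x \<Rightarrow> 'k::chilbert \<Rightarrow> 'k" and \<rho> :: "'a \<Rightarrow> 'k \<Rightarrow> 'k"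
  assumes F_\<theta>F: "\<forall>a b x. F (lact a (ract x b)) =
      cinner (\<theta>F x (gns_rep q b (gns_vec q))) (gns_rep q (star a) (gns_vec q))"
    and "cdense D" and rep: "star_rep D \<rho>" and "nondegenerate D \<rho>" and "\<psi> \<in> D"
    and cyclic: "range (\<lambda>a. \<rho> a \<psi>) = D" and f: "\<forall>a. f a = cinner (\<rho> a \<psi>) \<psi>"
    and F_\<theta>: "\<forall>a b x. F (lact a (ract x b)) = cinner (\<theta> x (\<rho> b \<psi>)) (\<rho> (star a) \<psi>)"
  shows "\<exists>U. cunitary U \<and> U (gns_vec q) = \<psi> \<and> U ` range q = D \<and>
           (\<forall>a. \<forall>v\<in>D. \<rho> a v = U (gns_rep q a (inv U v))) \<and>
           (\<forall>x. \<forall>v\<in>D. \<theta> x v = U (\<theta>F x (inv U v)))"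
proof -
  obtain U where U: "cunitary U" and U_q: "\<And>a. U (q a) = \<rho> a \<psi>"
    using gns_unitary_equivalence[OF rep \<open>\<psi> \<in> D\<close> cyclic \<open>cdense D\<close>] f by metis
  have cinner_U: "cinner (U u) (U v) = cinner u v" for u v
    using U unfolding cunitary_def by blast
  have inv_U: "inv U (\<rho> b \<psi>) = q b" for b
    using U U_q[of b] unfolding cunitary_def bij_def by (metis inv_f_f)
  have \<rho>_mult: "\<rho> (a * b) \<psi> = \<rho> a (\<rho> b \<psi>)" for a b
    using rep \<open>\<psi> \<in> D\<close> unfolding star_rep_def by blast
  have \<theta>_U: "\<theta> x (\<rho> b \<psi>) = U (\<theta>F x (inv U (\<rho> b \<psi>)))" for x b
    unfolding inv_U
  proof (rule cdense_range_cinner_eqI)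
    show "cdense (range (\<lambda>c. \<rho> c \<psi>))"
      using cyclic \<open>cdense D\<close> by simp
    fix c
    have "cinner (\<theta> x (\<rho> b \<psi>)) (\<rho> c \<psi>) = F (lact (star c) (ract x b))"
      using F_\<theta> by (simp add: star_star)
    also have "\<dots> = cinner (\<theta>F x (q b)) (q c)"
      using F_\<theta>F by (simp add: star_star)
    also have "\<dots> = cinner (U (\<theta>F x (q b))) (\<rho> c \<psi>)"
      by (simp add: cinner_U flip: U_q)
    finally show "cinner (\<theta> x (\<rho> b \<psi>)) (\<rho> c \<psi>) = cinner (U (\<theta>F x (q b))) (\<rho> c \<psi>)" .
  qed
  have U_vec: "U (gns_vec q) = \<psi>"
    using \<open>nondegenerate D \<rho>\<close> \<open>\<psi> \<in> D\<close> by (simp add: gns_vec_def U_q nondegenerate_def)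
  have U_range: "U ` range q = D"
    using cyclic by (simp add: image_image U_q)
  have \<rho>_U: "\<rho> a (\<rho> b \<psi>) = U (gns_rep q a (inv U (\<rho> b \<psi>)))" for a b
    by (simp add: inv_U U_q \<rho>_mult)
  show ?thesis
    using U U_vec U_range \<rho>_U \<theta>_U cyclic by blast
qed

end

section \<open>The representation of a bounded hermitian functional\<close>

locale bounded_bimodule_functional = gns_construction f q
  for f :: "'a::cstar_algebra \<Rightarrow> complex" and q :: "'a \<Rightarrow> 'h::chilbert" +
  fixes lact :: "'a \<Rightarrow> 'x::cvec \<Rightarrow> 'x" and ract :: "'x \<Rightarrow> 'a \<Rightarrow> 'x" and xst :: "'x \<Rightarrow> 'x"
    and F :: "'x \<Rightarrow> complex"
  assumes bimod: "star_bimodule lact ract xst"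
    and F_lin: "clinear_functional F"
    and F_herm: "F (xst x) = cnj (F x)"
    and F_bound: "\<exists>C>0. \<forall>a. (cmod (F (lact (star a) x)))\<^sup>2 \<le> C * Re (f (star a * a))"
begin

lemma
  shows F_add: "F (x + y) = F x + F y"
    and F_scaleC: "F (scaleC c x) = c * F x"
  using F_lin unfolding clinear_functional_def by blast+

lemma
  shows lact_add_right: "lact a (x + y) = lact a x + lact a y"
    and lact_add_left: "lact (a + b) x = lact a x + lact b x"
    and lact_scaleC_left: "lact (scaleC c a) x = scaleC c (lact a x)"
    and lact_scaleC_right: "lact a (scaleC c x) = scaleC c (lact a x)"
    and lact_mult: "lact (a * b) x = lact a (lact b x)"
    and ract_add_left: "ract (x + y) a = ract x a + ract y a"
    and ract_add_right: "ract x (a + b) = ract x a + ract x b"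
    and ract_scaleC_right: "ract x (scaleC c a) = scaleC c (ract x a)"
    and ract_scaleC_left: "ract (scaleC c x) a = scaleC c (ract x a)"
    and ract_mult: "ract x (a * b) = ract (ract x a) b"
    and ract_lact: "ract (lact a x) b = lact a (ract x b)"
    and xst_xst: "xst (xst x) = x"
    and xst_lact_ract: "xst (lact a (ract x b)) = lact (star b) (ract (xst x) (star a))"
  using bimod unfolding star_bimodule_def by simp_all

lemma F_diff: "F (x - y) = F x - F y"
  and lact_diff_right: "lact a (x - y) = lact a x - lact a y"
  and ract_diff_right: "ract x (a - b) = ract x a - ract x b"
  by (simp_all add: additive.diff additive.intro F_add lact_add_right ract_add_right)

lemma F_null:
  assumes "q d = 0"
  shows "F (lact (star c) (ract x d)) = 0"
proof -
  obtain C where C: "\<forall>a. (cmod (F (lact (star a) (ract (xst x) c))))\<^sup>2 \<le> C * Re (f (star a * a))"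
    using F_bound by blast
  have "f (star d * d) = 0"
    using cinner_q[of d d] assms by simp
  then have "F (lact (star d) (ract (xst x) c)) = 0"
    using C[rule_format, of d] by simp
  then show ?thesis
    using F_herm[of "lact (star c) (ract x d)"] by (simp add: xst_lact_ract star_star)
qed

lemma F_cong:
  assumes "q b = q b'"
  shows "F (lact (star c) (ract x b)) = F (lact (star c) (ract x b'))"
  using F_null[of "b - b'" c x] assms by (simp add: q_diff ract_diff_right lact_diff_right F_diff)

lemma riesz_vector: "\<exists>w. \<forall>c. cinner w (q c) = F (lact (star c) (ract x b))"
proof -
  obtain C where "C > 0" and C: "\<forall>a. (cmod (F (lact (star a) (ract x b))))\<^sup>2 \<le> C * Re (f (star a * a))"
    using F_bound by blast
  interpret bounded_antilinear_functional q "\<lambda>c. F (lact (star c) (ract x b))" C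
    using \<open>C > 0\<close> C
    by unfold_locales (simp_all add: q_add q_scaleC star_add star_scaleC lact_add_left
        lact_scaleC_left F_add F_scaleC cnorm_power2 cinner_q)
  show ?thesis
    by (rule riesz_representation)
qed

text \<open>The inner \<open>SOME\<close> picks a representative \<open>b\<close> of \<open>v = b + N\<^sub>f\<close>; by \<open>F_cong\<close> the choice is
  immaterial.\<close>
definition theta :: "'x \<Rightarrow> 'h \<Rightarrow> 'h" where
  "theta x v = (SOME w. \<forall>c. cinner w (q c) = F (lact (star c) (ract x (SOME b. q b = v))))"

lemma cinner_theta: "cinner (theta x (q b)) (q c) = F (lact (star c) (ract x b))"
proof -
  have "\<forall>c. cinner (theta x (q b)) (q c) = F (lact (star c) (ract x (SOME b'. q b' = q b)))"
    unfolding theta_def by (rule someI_ex) (rule riesz_vector)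
  moreover have "q (SOME b'. q b' = q b) = q b"
    by (rule someI) (rule refl)
  ultimately show ?thesis
    using F_cong by metis
qed

lemma cinner_theta_xst: "cinner (q b) (theta (xst x) (q c)) = cinner (theta x (q b)) (q c)"
proof -
  have "cinner (q b) (theta (xst x) (q c)) = cnj (F (lact (star b) (ract (xst x) c)))"
    by (subst cinner_commute) (simp add: cinner_theta)
  also have "\<dots> = F (lact (star c) (ract x b))"
    by (simp add: xst_lact_ract star_star xst_xst flip: F_herm)
  finally show ?thesis
    by (simp add: cinner_theta)
qed

lemma adjoint_theta:
  assumes "\<psi> \<in> range q"
  shows "adjoint (range q) (theta x) \<psi> = theta (xst x) \<psi>"
  unfolding adjoint_def
proof (rule the_equality)
  show "\<forall>\<phi>\<in>range q. cinner (theta x \<phi>) \<psi> = cinner \<phi> (theta (xst x) \<psi>)"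
    using assms by (auto simp: cinner_theta_xst)
next
  fix \<eta>
  assume \<eta>: "\<forall>\<phi>\<in>range q. cinner (theta x \<phi>) \<psi> = cinner \<phi> \<eta>"
  show "\<eta> = theta (xst x) \<psi>"
  proof (rule q_eqI)
    fix c
    have "cinner (q c) \<eta> = cinner (q c) (theta (xst x) \<psi>)"
      using \<eta> assms by (auto simp: cinner_theta_xst)
    then show "cinner \<eta> (q c) = cinner (theta (xst x) \<psi>) (q c)"
      by (metis cinner_commute)
  qed
qed

lemma Lplus_theta: "Lplus (range q) (theta x)"
  unfolding Lplus_def clinear_on_def adj_domain_def
proof (intro conjI ballI allI subsetI CollectI)
  fix u v
  assume "u \<in> range q" "v \<in> range q"
  then show "theta x (u + v) = theta x u + theta x v"
    by (auto intro!: q_eqI simp: cinner_theta cinner_add_left ract_add_right lact_add_right F_add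
        simp flip: q_add)
next
  fix c u
  assume "u \<in> range q"
  then show "theta x (scaleC c u) = scaleC c (theta x u)"
    by (auto intro!: q_eqI simp: cinner_theta cinner_scaleC_left ract_scaleC_right
        lact_scaleC_right F_scaleC simp flip: q_scaleC)
next
  fix \<psi>
  assume "\<psi> \<in> range q"
  then show "\<exists>\<eta>. \<forall>\<phi>\<in>range q. cinner (theta x \<phi>) \<psi> = cinner \<phi> \<eta>"
    by (intro exI[of _ "theta (xst x) \<psi>"]) (auto simp: cinner_theta_xst)
qed

lemma bimod_star_rep_theta: "bimod_star_rep lact ract xst (range q) theta (gns_rep q)"
  unfolding bimod_star_rep_def
proof (intro conjI allI ballI)
  show "star_rep (range q) (gns_rep q)"
    by (rule star_rep_gns)
  show "nondegenerate (range q) (gns_rep q)"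
    by (rule nondegenerate_gns)
  show "Lplus (range q) (theta x)" for x
    by (rule Lplus_theta)
  show "theta (xst x) \<psi> = adjoint (range q) (theta x) \<psi>" if "\<psi> \<in> range q" for x \<psi>
    using adjoint_theta[OF that] by simp
  fix v
  assume "v \<in> range q"
  then show "theta (x + y) v = theta x v + theta y v" for x y
    by (auto intro!: q_eqI simp: cinner_theta cinner_add_left ract_add_left lact_add_right F_add)
  show "theta (scaleC c x) v = scaleC c (theta x v)" for c x
    using \<open>v \<in> range q\<close>
    by (auto intro!: q_eqI simp: cinner_theta cinner_scaleC_left ract_scaleC_left
        lact_scaleC_right F_scaleC)
  show "cinner (theta (lact a (ract x b)) \<phi>) v = cinner (theta x (gns_rep q b \<phi>)) (gns_rep q (star a) v)"
    if "\<phi> \<in> range q" for a b x \<phi>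
    using that \<open>v \<in> range q\<close>
    by (auto simp: cinner_theta star_mult star_star lact_mult ract_mult ract_lact)
qed

lemma F_theta:
  "F (lact a (ract x b)) = cinner (theta x (gns_rep q b (gns_vec q))) (gns_rep q (star a) (gns_vec q))"
  by (simp add: cinner_theta star_star)

end

theorem theorem5p1:
  fixes lact :: "'a::cstar_algebra \<Rightarrow> 'x::cvec \<Rightarrow> 'x"
    and ract :: "'x \<Rightarrow> 'a \<Rightarrow> 'x"
    and xst :: "'x \<Rightarrow> 'x"
    and F :: "'x \<Rightarrow> complex"
    and f :: "'a \<Rightarrow> complex"
    and q :: "'a \<Rightarrow> 'h::chilbert"
  assumes bimod: "star_bimodule lact ract xst"
    and F_lin: "clinear_functional F"
    and F_herm: "\<forall>x. F (xst x) = cnj (F x)"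
    and f_lin: "clinear_functional f"
    and f_pos: "positive_functional f"
    and bound: "\<forall>x. \<exists>C::real. C > 0 \<and>
                   (\<forall>a. (cmod (F (lact (star a) x)))\<^sup>2 \<le> C * Re (f (star a * a)))"
    and gns: "gns_completion f q"
  shows "(\<exists>\<theta>F :: 'x \<Rightarrow> 'h \<Rightarrow> 'h.
            bimod_star_rep lact ract xst (range q) \<theta>F (gns_rep q) \<and>
            (\<forall>a b x. F (lact a (ract x b)) =
                cinner (\<theta>F x (gns_rep q b (gns_vec q))) (gns_rep q (star a) (gns_vec q))))
       \<and>
         (\<forall>\<theta>F :: 'x \<Rightarrow> 'h \<Rightarrow> 'h.
            bimod_star_rep lact ract xst (range q) \<theta>F (gns_rep q) \<and>
            (\<forall>a b x. F (lact a (ract x b)) =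
                cinner (\<theta>F x (gns_rep q b (gns_vec q))) (gns_rep q (star a) (gns_vec q)))
          \<longrightarrow>
            (\<forall>(D :: 'k::chilbert set) (\<theta> :: 'x \<Rightarrow> 'k \<Rightarrow> 'k) (\<rho> :: 'a \<Rightarrow> 'k \<Rightarrow> 'k) \<psi>.
               dense_domain D \<and> bimod_star_rep lact ract xst D \<theta> \<rho> \<and> \<psi> \<in> D \<and>
               (\<lambda>a. \<rho> a \<psi>) ` UNIV = D \<and>
               (\<forall>a. f a = cinner (\<rho> a \<psi>) \<psi>) \<and>
               (\<forall>a b x. F (lact a (ract x b)) = cinner (\<theta> x (\<rho> b \<psi>)) (\<rho> (star a) \<psi>))
             \<longrightarrow>
               (\<exists>U :: 'h \<Rightarrow> 'k. cunitary U \<and> U (gns_vec q) = \<psi> \<and> U ` range q = D \<and>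
                  (\<forall>a. \<forall>v\<in>D. \<rho> a v = U (gns_rep q a (inv U v))) \<and>
                  (\<forall>x. \<forall>v\<in>D. \<theta> x v = U (\<theta>F x (inv U v))))))"
proof -
  interpret bounded_bimodule_functional f q lact ract xst F
    using gns bimod F_lin F_herm bound by unfold_locales auto
  show ?thesis
  proof (intro conjI allI impI, goal_cases)
    case 1
    show ?case
      using bimod_star_rep_theta F_theta by blast
  next
    case 2
    then show ?case
      unfolding dense_domain_def bimod_star_rep_def
      by (elim conjE) (rule bimodule_rep_unique; assumption)
  qed
qed

end
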